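(* Let $n,d\in\mathbb{N}$, let $\mathcal{A}_n=\{0,2,4,\dots,2n-2\}$ and $\mathcal{B}_n=\{1,3,5,\dots,2n-1\}$. Let $X,Y,A,B,\Lambda$ be random variables with joint distribution $P_{XYAB\Lambda}$, where $X$ and $Y$ take values in $\{0,1,\dots,d\}$, such that $P_{X\Lambda|AB}=P_{X\Lambda|A}$, $P_{Y\Lambda|AB}=P_{Y\Lambda|B}$, and $P_{AB\Lambda}=P_A\times P_B\times P_\Lambda$, with $\mathrm{supp}(P_A)\supseteq\mathcal{A}_n$ and $\mathrm{supp}(P_B)\supseteq\mathcal{B}_n$. Then $$\int \mathrm{d}P_\Lambda(\lambda)\sum_{x=0}^{d-1}\Big|P_{X|A\Lambda}(x|0,\lambda)-\frac1d\Big|\le\frac d2\, I_{n,d}(P_{XY|AB}).$$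
   Context: For a conditional distribution $P_{XY|AB}$, define $$I_{n,d}(P_{XY|AB})=2n-\sum_{x=0}^{d-1}P_{XY|AB}(x,x\oplus1|0,2n-1)-\sum_{\substack{a\in\mathcal{A}_n,\,b\in\mathcal{B}_n\\|a-b|=1}}\sum_{x=0}^{d-1}P_{XY|AB}(x,x|a,b),$$ where $\oplus$ denotes addition modulo $d$ on $\{0,\dots,d-1\}$. *)

theory Defs
  imports "HOL-Probability.Probability"
begin

definition A_set :: "nat \<Rightarrow> nat set" where
  "A_set n = {a. even a \<and> a < 2*n}"

definition B_set :: "nat \<Rightarrow> nat set" where
  "B_set n = {b. odd b \<and> b < 2*n}"

text \<open>Hidden-variable model: M is the distribution P_Lambda of Lambda, and
  p l x y a b = P_{XY|AB Lambda}(x,y|a,b,l).\<close>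
definition PXY_AB :: "'l measure \<Rightarrow> ('l \<Rightarrow> nat \<Rightarrow> nat \<Rightarrow> nat \<Rightarrow> nat \<Rightarrow> real)
    \<Rightarrow> nat \<Rightarrow> nat \<Rightarrow> nat \<Rightarrow> nat \<Rightarrow> real" where
  "PXY_AB M p x y a b = (\<integral>l. p l x y a b \<partial>M)"

definition PX_ABL :: "nat \<Rightarrow> ('l \<Rightarrow> nat \<Rightarrow> nat \<Rightarrow> nat \<Rightarrow> nat \<Rightarrow> real)
    \<Rightarrow> 'l \<Rightarrow> nat \<Rightarrow> nat \<Rightarrow> nat \<Rightarrow> real" where
  "PX_ABL d p l x a b = (\<Sum>y\<in>{0..d}. p l x y a b)"

definition PY_ABL :: "nat \<Rightarrow> ('l \<Rightarrow> nat \<Rightarrow> nat \<Rightarrow> nat \<Rightarrow> nat \<Rightarrow> real)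
    \<Rightarrow> 'l \<Rightarrow> nat \<Rightarrow> nat \<Rightarrow> nat \<Rightarrow> real" where
  "PY_ABL d p l y a b = (\<Sum>x\<in>{0..d}. p l x y a b)"

definition I_nd :: "nat \<Rightarrow> nat \<Rightarrow> (nat \<Rightarrow> nat \<Rightarrow> nat \<Rightarrow> nat \<Rightarrow> real) \<Rightarrow> real" where
  "I_nd n d P = 2 * real n
     - (\<Sum>x<d. P x ((x + 1) mod d) 0 (2*n - 1))
     - (\<Sum>a\<in>A_set n. \<Sum>b\<in>B_set n. if a = b + 1 \<or> b = a + 1 then (\<Sum>x<d. P x x a b) else 0)"

end

theory Submission
  imports Defs
begin

text \<open>
  Fix a value of the hidden variable. Walk along the chain of inputs 0, 1, 2, ..., 2n-1, which
  alternates between Alice's and Bob's inputs; by no-signalling, the marginal V k at node k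
  (Alice's for even k, Bob's for odd k) does not depend on the partner input. On the link between
  nodes k and k+1 the probability of equal outputs x < d is at most the sum over x of
  min (V k x) (V (k+1) x), so twice the failure term of that link dominates the mass the two
  marginals put on the extra outcome d plus their l1-distance on {0..<d}. The closing link
  (0, 2n-1) rewards x+1 instead of x, so it controls the distance from V 0 to the rotated V (2n-1).
  Summing along the chain, I(n,d) dominates the mass defect of V 0 plus half its cyclic variation,
  the sum of |V 0 (x+1 mod d) - V 0 x|. A vector with small cyclic variation and small defect is
  close to uniform, by a sign-vector argument. Finally I(n,d) is affine in the behaviour, so
  integrating over the hidden variable gives the bound for the observed statistics.
\<close>

lemma abs_diff_le_sum_abs_steps:
  fixes f :: "nat \<Rightarrow> 'a::ordered_ab_group_add_abs"
  assumes "j \<le> k"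
  shows "\<bar>f k - f j\<bar> \<le> (\<Sum>i=j..<k. \<bar>f (Suc i) - f i\<bar>)"
  using sum_abs[of "\<lambda>i. f (Suc i) - f i" "{j..<k}"] by (simp add: sum_Suc_diff' assms)

lemma cyclic_variation_ge:
  fixes q :: "nat \<Rightarrow> real"
  assumes "x < d" "y < d"
  shows "2 * \<bar>q x - q y\<bar> \<le> (\<Sum>i<d. \<bar>q ((i + 1) mod d) - q i\<bar>)"
proof -
  have arcs: "2 * \<bar>q x - q y\<bar> \<le> (\<Sum>i<d. \<bar>q ((i + 1) mod d) - q i\<bar>)" if "x \<le> y" "y < d" for x y
  proof -
    define f where "f i = q (i mod d)" for i
    have "(\<Sum>i<d. \<bar>q ((i + 1) mod d) - q i\<bar>) = (\<Sum>i<d. \<bar>f (Suc i) - f i\<bar>)"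
      by (rule sum.cong) (simp_all add: f_def)
    also have "\<dots> = (\<Sum>i=0..<x. \<bar>f (Suc i) - f i\<bar>) + (\<Sum>i=x..<y. \<bar>f (Suc i) - f i\<bar>)
        + (\<Sum>i=y..<d. \<bar>f (Suc i) - f i\<bar>)"
      using that by (simp add: sum.atLeastLessThan_concat atLeast0LessThan[symmetric])
    finally have "(\<Sum>i<d. \<bar>q ((i + 1) mod d) - q i\<bar>) \<ge> \<bar>f x - f 0\<bar> + \<bar>f y - f x\<bar> + \<bar>f d - f y\<bar>"
      using abs_diff_le_sum_abs_steps[of 0 x f] abs_diff_le_sum_abs_steps[of x y f]
        abs_diff_le_sum_abs_steps[of y d f] that by linarith
    moreover have "f d = f 0" "f x = q x" "f y = q y" using that by (simp_all add: f_def)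
    ultimately show ?thesis by (simp add: abs_if split: if_splits)
  qed
  show ?thesis
    using arcs[of x y] arcs[of y x] assms by (cases "x \<le> y") (auto simp: abs_minus_commute)
qed

lemma sum_abs_deviation_le:
  fixes q :: "'a \<Rightarrow> real"
  assumes S: "finite S" and spread: "\<And>x. x \<in> S \<Longrightarrow> \<bar>q x - c\<bar> \<le> r"
  shows "(\<Sum>x\<in>S. \<bar>q x - t\<bar>) \<le> \<bar>real (card S) * t - sum q S\<bar> + real (card S) * r"
proof (cases "S = {}")
  case True then show ?thesis by simp
next
  case False
  define m where "m = real (card S)"
  define s where "s x = (if t \<le> q x then 1 else -1 :: real)" for x
  define sb where "sb = sum s S / m"
  have m: "m > 0" using S False by (simp add: m_def card_gt_0_iff)
  obtain x0 where "x0 \<in> S" using False by blast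
  then have r: "r \<ge> 0" using spread abs_ge_zero[of "q x0 - c"] by fastforce
  have sum_s: "sum s S = m * sb" using m by (simp add: sb_def)
  have "\<bar>s x\<bar> = 1" for x by (simp add: s_def)
  then have "\<bar>sum s S\<bar> \<le> m"
    using sum_abs[of s S] by (simp add: m_def)
  then have sb: "\<bar>sb\<bar> \<le> 1" using m by (simp add: sb_def pos_divide_le_eq)
  text \<open>The centred signs s x - sb sum to zero, so the centre c can be subtracted from q
    for free, and their absolute values sum to m (1 - sb^2) <= m.\<close>
  have "(\<Sum>x\<in>S. \<bar>q x - t\<bar>) = (\<Sum>x\<in>S. s x * (q x - t))"
    by (rule sum.cong) (simp_all add: s_def)
  also have "\<dots> = (\<Sum>x\<in>S. s x * q x) - t * sum s S"
    by (simp add: right_diff_distrib sum_subtractf sum_distrib_left mult.commute)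
  also have "\<dots> = (\<Sum>x\<in>S. (s x - sb) * (q x - c)) + sb * (sum q S - m * t)"
  proof -
    have "(\<Sum>x\<in>S. (s x - sb) * (q x - c)) = (\<Sum>x\<in>S. s x * q x - c * s x - sb * q x + sb * c)"
      by (rule sum.cong) (simp_all add: algebra_simps)
    also have "\<dots> = (\<Sum>x\<in>S. s x * q x) - c * sum s S - sb * sum q S + m * sb * c"
      by (simp add: sum.distrib sum_subtractf sum_distrib_left m_def)
    finally show ?thesis by (simp add: sum_s algebra_simps)
  qed
  also have "(\<Sum>x\<in>S. (s x - sb) * (q x - c)) \<le> (\<Sum>x\<in>S. \<bar>s x - sb\<bar> * r)"
  proof (rule sum_mono)
    fix x assume "x \<in> S"
    then have "\<bar>s x - sb\<bar> * \<bar>q x - c\<bar> \<le> \<bar>s x - sb\<bar> * r"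
      using spread by (simp add: mult_left_mono)
    then show "(s x - sb) * (q x - c) \<le> \<bar>s x - sb\<bar> * r"
      by (metis abs_ge_self abs_mult order_trans)
  qed
  also have "(\<Sum>x\<in>S. \<bar>s x - sb\<bar> * r) = (\<Sum>x\<in>S. 1 - s x * sb) * r"
  proof -
    have "\<bar>s x - sb\<bar> = 1 - s x * sb" for x
      using sb by (simp add: s_def abs_if split: if_splits)
    then show ?thesis by (simp add: sum_distrib_right)
  qed
  also have "\<dots> = (m - m * sb\<^sup>2) * r"
    by (simp add: sum_subtractf flip: sum_distrib_right) (simp add: m_def sum_s power2_eq_square)
  also have "\<dots> \<le> m * r" using m r by (simp add: mult_right_mono)
  also have "sb * (sum q S - m * t) \<le> \<bar>m * t - sum q S\<bar>"
  proof -
    have "\<bar>sb * (sum q S - m * t)\<bar> \<le> \<bar>m * t - sum q S\<bar>"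
      unfolding abs_mult using sb by (simp add: abs_minus_commute mult_left_le_one_le)
    then show ?thesis by linarith
  qed
  finally show ?thesis by (simp add: m_def add.commute)
qed

lemma dist_uniform_le_cyclic_variation:
  fixes q :: "nat \<Rightarrow> real"
  assumes "0 < d"
  shows "(\<Sum>x<d. \<bar>q x - 1 / real d\<bar>)
    \<le> \<bar>1 - sum q {..<d}\<bar> + real d * (\<Sum>i<d. \<bar>q ((i + 1) mod d) - q i\<bar>) / 4"
proof -
  define D where "D = (\<Sum>i<d. \<bar>q ((i + 1) mod d) - q i\<bar>)"
  define hi where "hi = Max (q ` {..<d})"
  define lo where "lo = Min (q ` {..<d})"
  have range_ne: "q ` {..<d} \<noteq> {}" using assms by blast
  obtain x y where x: "x < d" "q x = hi" and y: "y < d" "q y = lo"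
    using Max_in[OF _ range_ne] Min_in[OF _ range_ne] unfolding hi_def lo_def by fastforce
  have "2 * (hi - lo) \<le> 2 * \<bar>q x - q y\<bar>" using x y abs_ge_self[of "hi - lo"] by simp
  also have "\<dots> \<le> D" unfolding D_def by (rule cyclic_variation_ge[OF x(1) y(1)])
  finally have range: "2 * (hi - lo) \<le> D" .
  have "\<bar>q z - (hi + lo) / 2\<bar> \<le> D / 4" if "z \<in> {..<d}" for z
  proof -
    have "lo \<le> q z" "q z \<le> hi" using that unfolding hi_def lo_def by simp_all
    then show ?thesis unfolding abs_le_iff using range by (simp add: field_simps)
  qed
  from sum_abs_deviation_le[where S = "{..<d}" and t = "1 / real d", OF finite_lessThan this] assms
  show ?thesis by (simp add: D_def)
qed

lemma sum_lessThan_rotate: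
  fixes d :: nat
  shows "(\<Sum>x<d. f (Suc x mod d)) = (\<Sum>x<d. f x)"
proof (cases d)
  case (Suc m)
  have "(\<Sum>x<Suc m. f (Suc x mod Suc m)) = (\<Sum>x<m. f (Suc x)) + f 0"
    by (simp add: sum.lessThan_Suc)
  also have "\<dots> = (\<Sum>x<Suc m. f x)"
    by (subst sum.lessThan_Suc_shift) (simp add: add.commute)
  finally show ?thesis using Suc by simp
qed simp

text \<open>For a distribution v on {0..d}, the weight of the extra outcome d.\<close>
definition mass_defect :: "nat \<Rightarrow> (nat \<Rightarrow> real) \<Rightarrow> real" where
  "mass_defect d v = 1 - (\<Sum>x<d. v x)"

lemma mass_defects_variation_le_disagreement:
  fixes f g h :: "nat \<Rightarrow> real"
  assumes "\<And>x. x < d \<Longrightarrow> f x \<le> g x" "\<And>x. x < d \<Longrightarrow> f x \<le> h x"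
  shows "mass_defect d g + mass_defect d h + (\<Sum>x<d. \<bar>h x - g x\<bar>) \<le> 2 * (1 - sum f {..<d})"
proof -
  have "(\<Sum>x<d. 2 * f x) \<le> (\<Sum>x<d. g x + h x - \<bar>h x - g x\<bar>)"
    by (rule sum_mono) (use assms in \<open>auto simp: abs_if\<close>)
  then show ?thesis
    by (simp add: mass_defect_def sum.distrib sum_subtractf sum_distrib_left)
qed

context
  fixes d N :: nat and V :: "nat \<Rightarrow> nat \<Rightarrow> real" and u :: "nat \<Rightarrow> real" and u' :: real
  assumes N_pos: "0 < N"
    and defect_nonneg: "\<And>k. k \<le> N \<Longrightarrow> 0 \<le> mass_defect d (V k)"
    and link: "\<And>k. k < N \<Longrightarrow> mass_defect d (V k) + mass_defect d (V (Suc k))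
                 + (\<Sum>x<d. \<bar>V (Suc k) x - V k x\<bar>) \<le> 2 * u k"
    and closing: "mass_defect d (V 0) + mass_defect d (V N)
                 + (\<Sum>x<d. \<bar>V N ((x + 1) mod d) - V 0 x\<bar>) \<le> 2 * u'"
begin

lemma chain_total_ge_defect: "2 * mass_defect d (V 0) \<le> u' + (\<Sum>k<N. u k)"
proof -
  have link_ge: "mass_defect d (V k) \<le> u k" if "k < N" for k
  proof -
    have "\<bar>mass_defect d (V k) - mass_defect d (V (Suc k))\<bar> \<le> (\<Sum>x<d. \<bar>V (Suc k) x - V k x\<bar>)"
      using sum_abs[of "\<lambda>x. V (Suc k) x - V k x" "{..<d}"] by (simp add: mass_defect_def sum_subtractf)
    then show ?thesis using link[OF that] unfolding abs_le_iff by linarith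
  qed
  have closing_ge: "mass_defect d (V 0) \<le> u'"
  proof -
    have "\<bar>mass_defect d (V 0) - mass_defect d (V N)\<bar> \<le> (\<Sum>x<d. \<bar>V N ((x + 1) mod d) - V 0 x\<bar>)"
      using sum_abs[of "\<lambda>x. V N ((x + 1) mod d) - V 0 x" "{..<d}"]
      by (simp add: mass_defect_def sum_subtractf sum_lessThan_rotate[of "V N"])
    then show ?thesis using closing unfolding abs_le_iff by linarith
  qed
  have "0 \<le> u k" if "k < N" for k
    using defect_nonneg[of k] link_ge[OF that] that by simp
  then have "u 0 \<le> (\<Sum>k<N. u k)"
    using N_pos by (intro member_le_sum) auto
  then show ?thesis using link_ge[OF N_pos] closing_ge by linarith
qed

lemma chain_total_ge_variation:
  "2 * mass_defect d (V 0) + (\<Sum>x<d. \<bar>V 0 ((x + 1) mod d) - V 0 x\<bar>) \<le> 2 * (u' + (\<Sum>k<N. u k))"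
proof -
  have "(\<Sum>x<d. \<bar>V N x - V 0 x\<bar>) \<le> (\<Sum>x<d. \<Sum>k<N. \<bar>V (Suc k) x - V k x\<bar>)"
    by (rule sum_mono) (use abs_diff_le_sum_abs_steps[of 0 N] in \<open>simp add: atLeast0LessThan\<close>)
  then have chain: "(\<Sum>x<d. \<bar>V N x - V 0 x\<bar>) \<le> (\<Sum>k<N. \<Sum>x<d. \<bar>V (Suc k) x - V k x\<bar>)"
    by (simp only: sum.swap[of _ "{..<N}"])
  have "(\<Sum>x<d. \<bar>V 0 ((x + 1) mod d) - V 0 x\<bar>)
      \<le> (\<Sum>x<d. \<bar>V 0 ((x + 1) mod d) - V N ((x + 1) mod d)\<bar> + \<bar>V N ((x + 1) mod d) - V 0 x\<bar>)"
    by (rule sum_mono) simp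
  also have "\<dots> = (\<Sum>x<d. \<bar>V N x - V 0 x\<bar>) + (\<Sum>x<d. \<bar>V N ((x + 1) mod d) - V 0 x\<bar>)"
    by (simp add: sum.distrib sum_lessThan_rotate[of "\<lambda>x. \<bar>V 0 x - V N x\<bar>"] abs_minus_commute)
  finally have variation: "(\<Sum>x<d. \<bar>V 0 ((x + 1) mod d) - V 0 x\<bar>)
      \<le> (\<Sum>x<d. \<bar>V N x - V 0 x\<bar>) + (\<Sum>x<d. \<bar>V N ((x + 1) mod d) - V 0 x\<bar>)" .
  have "mass_defect d (V 0) \<le> mass_defect d (V 0) + mass_defect d (V (Suc 0))"
    using defect_nonneg[of 1] N_pos by simp
  also have "\<dots> \<le> (\<Sum>k<N. mass_defect d (V k) + mass_defect d (V (Suc k)))"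
    by (rule member_le_sum[where f = "\<lambda>k. mass_defect d (V k) + mass_defect d (V (Suc k))"])
      (use N_pos defect_nonneg in \<open>auto intro: add_nonneg_nonneg\<close>)
  moreover have "(\<Sum>k<N. mass_defect d (V k) + mass_defect d (V (Suc k))
      + (\<Sum>x<d. \<bar>V (Suc k) x - V k x\<bar>)) \<le> (\<Sum>k<N. 2 * u k)"
    by (rule sum_mono) (simp add: link)
  ultimately show ?thesis
    using chain variation closing defect_nonneg[of N]
    by (simp add: sum.distrib sum_distrib_left)
qed

lemma chain_dist_uniform_le:
  assumes "0 < d"
  shows "(\<Sum>x<d. \<bar>V 0 x - 1 / real d\<bar>) \<le> real d / 2 * (u' + (\<Sum>k<N. u k))"
proof -
  define D where "D = (\<Sum>x<d. \<bar>V 0 ((x + 1) mod d) - V 0 x\<bar>)"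
  have "\<bar>1 - sum (V 0) {..<d}\<bar> = mass_defect d (V 0)"
    using defect_nonneg[of 0] by (simp add: mass_defect_def)
  then have dist: "(\<Sum>x<d. \<bar>V 0 x - 1 / real d\<bar>) \<le> mass_defect d (V 0) + real d * D / 4"
    using dist_uniform_le_cyclic_variation[OF assms, of "V 0"] by (simp add: D_def)
  show ?thesis
  proof (cases "d = 1")
    case True
    then show ?thesis using dist chain_total_ge_defect by (simp add: D_def)
  next
    case False
    then have d2: "2 \<le> real d" using assms by linarith
    have "real d / 2 * (2 * mass_defect d (V 0) + D) \<le> real d / 2 * (2 * (u' + (\<Sum>k<N. u k)))"
      using chain_total_ge_variation by (intro mult_left_mono) (simp_all add: D_def)
    moreover have "2 * mass_defect d (V 0) \<le> real d * mass_defect d (V 0)"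
      using d2 defect_nonneg[OF le0] by (rule mult_right_mono)
    ultimately show ?thesis using dist by (simp add: algebra_simps)
  qed
qed

end

lemma p_le_PX_ABL:
  assumes "\<And>y. 0 \<le> p l x y a b" "y \<le> d"
  shows "p l x y a b \<le> PX_ABL d p l x a b"
  unfolding PX_ABL_def by (rule member_le_sum) (use assms in auto)

lemma p_le_PY_ABL:
  assumes "\<And>x. 0 \<le> p l x y a b" "x \<le> d"
  shows "p l x y a b \<le> PY_ABL d p l y a b"
  unfolding PY_ABL_def by (rule member_le_sum) (use assms in auto)

context
  fixes d :: nat and p :: "'l \<Rightarrow> nat \<Rightarrow> nat \<Rightarrow> nat \<Rightarrow> nat \<Rightarrow> real" and l :: 'l and a b :: nat
  assumes nonneg: "\<And>x y. 0 \<le> p l x y a b"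
    and normalized: "(\<Sum>x\<in>{0..d}. \<Sum>y\<in>{0..d}. p l x y a b) = 1"
begin

lemma mass_defect_PX_ABL_nonneg: "0 \<le> mass_defect d (\<lambda>x. PX_ABL d p l x a b)"
proof -
  have "(\<Sum>x<d. PX_ABL d p l x a b) \<le> (\<Sum>x\<in>{0..d}. PX_ABL d p l x a b)"
    by (rule sum_mono2) (auto simp: PX_ABL_def nonneg sum_nonneg)
  then show ?thesis using normalized by (simp add: mass_defect_def PX_ABL_def)
qed

lemma mass_defect_PY_ABL_nonneg: "0 \<le> mass_defect d (\<lambda>y. PY_ABL d p l y a b)"
proof -
  have "(\<Sum>y<d. PY_ABL d p l y a b) \<le> (\<Sum>y\<in>{0..d}. PY_ABL d p l y a b)"
    by (rule sum_mono2) (auto simp: PY_ABL_def nonneg sum_nonneg)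
  also have "\<dots> = (\<Sum>x\<in>{0..d}. \<Sum>y\<in>{0..d}. p l x y a b)"
    unfolding PY_ABL_def by (rule sum.swap)
  finally show ?thesis using normalized by (simp add: mass_defect_def)
qed

lemma p_le_one:
  assumes "x \<le> d" "y \<le> d"
  shows "p l x y a b \<le> 1"
proof -
  have "p l x y a b \<le> PX_ABL d p l x a b"
    using p_le_PX_ABL[where p = p and l = l, OF nonneg] assms(2) .
  also have "\<dots> \<le> (\<Sum>x\<in>{0..d}. PX_ABL d p l x a b)"
    by (rule member_le_sum) (use assms(1) in \<open>auto simp: PX_ABL_def nonneg sum_nonneg\<close>)
  finally show ?thesis using normalized by (simp add: PX_ABL_def)
qed

end

text \<open>The k-th link of the chain 0, 1, ..., 2n-1 joins the input pair (chain_a k, chain_b k).\<close>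
definition chain_a :: "nat \<Rightarrow> nat" where
  "chain_a k = (if even k then k else Suc k)"

definition chain_b :: "nat \<Rightarrow> nat" where
  "chain_b k = (if even k then Suc k else k)"

lemma finite_A_set: "finite (A_set n)"
  by (rule finite_subset[of _ "{..<2 * n}"]) (auto simp: A_set_def)

lemma finite_B_set: "finite (B_set n)"
  by (rule finite_subset[of _ "{..<2 * n}"]) (auto simp: B_set_def)

lemma chain_links_in_inputs:
  assumes "k < 2 * n - 1"
  shows "chain_a k \<in> A_set n" "chain_b k \<in> B_set n"
  using assms by (auto simp: chain_a_def chain_b_def A_set_def B_set_def)

lemma adjacent_inputs_eq_chain_links:
  "{(a, b) \<in> A_set n \<times> B_set n. a = b + 1 \<or> b = a + 1}
     = (\<lambda>k. (chain_a k, chain_b k)) ` {..<2 * n - 1}"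
proof
  show "{(a, b) \<in> A_set n \<times> B_set n. a = b + 1 \<or> b = a + 1}
      \<subseteq> (\<lambda>k. (chain_a k, chain_b k)) ` {..<2 * n - 1}"
  proof clarify
    fix a b assume "a \<in> A_set n" "b \<in> B_set n" "a = b + 1 \<or> b = a + 1"
    then have "(a, b) = (chain_a (min a b), chain_b (min a b))" "min a b < 2 * n - 1"
      by (auto simp: A_set_def B_set_def chain_a_def chain_b_def)
    then show "(a, b) \<in> (\<lambda>k. (chain_a k, chain_b k)) ` {..<2 * n - 1}" by force
  qed
qed (auto simp: chain_a_def chain_b_def A_set_def B_set_def split: if_splits)

lemma inj_chain_links: "inj (\<lambda>k. (chain_a k, chain_b k))"
  by (rule injI) (auto simp: chain_a_def chain_b_def split: if_splits)

lemma I_nd_chain_form: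
  assumes "1 \<le> n"
  shows "I_nd n d P = (1 - (\<Sum>x<d. P x ((x + 1) mod d) 0 (2 * n - 1)))
    + (\<Sum>k<2 * n - 1. 1 - (\<Sum>x<d. P x x (chain_a k) (chain_b k)))"
proof -
  have fin: "finite (A_set n \<times> B_set n)" by (simp add: finite_A_set finite_B_set)
  define T where "T a b = (\<Sum>x<d. P x x a b)" for a b
  have "(\<Sum>a\<in>A_set n. \<Sum>b\<in>B_set n. if a = b + 1 \<or> b = a + 1 then T a b else 0)
      = (\<Sum>e\<in>A_set n \<times> B_set n. if fst e = snd e + 1 \<or> snd e = fst e + 1 then T (fst e) (snd e) else 0)"
    by (simp add: sum.cartesian_product case_prod_beta)
  also have "\<dots> = (\<Sum>e\<in>{(a, b) \<in> A_set n \<times> B_set n. a = b + 1 \<or> b = a + 1}. T (fst e) (snd e))"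
    by (subst sum.inter_filter[OF fin, symmetric]) (rule sum.cong; auto)
  also have "\<dots> = (\<Sum>k<2 * n - 1. T (chain_a k) (chain_b k))"
    unfolding adjacent_inputs_eq_chain_links
    by (subst sum.reindex) (simp_all add: inj_on_subset[OF inj_chain_links])
  finally have "(\<Sum>a\<in>A_set n. \<Sum>b\<in>B_set n. if a = b + 1 \<or> b = a + 1 then (\<Sum>x<d. P x x a b) else 0)
      = (\<Sum>k<2 * n - 1. \<Sum>x<d. P x x (chain_a k) (chain_b k))"
    unfolding T_def .
  then show ?thesis
    using assms by (simp add: I_nd_def sum_subtractf of_nat_diff)
qed

lemma PX_ABL_dist_uniform_le_I_nd:
  fixes p :: "'l \<Rightarrow> nat \<Rightarrow> nat \<Rightarrow> nat \<Rightarrow> nat \<Rightarrow> real"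
  assumes n: "1 \<le> n" and d: "0 < d"
    and nonneg: "\<And>x y a b. 0 \<le> p l x y a b"
    and normalized: "\<And>a b. (\<Sum>x\<in>{0..d}. \<Sum>y\<in>{0..d}. p l x y a b) = 1"
    and nosig_X: "\<And>a b x. a \<in> A_set n \<Longrightarrow> b \<in> B_set n \<Longrightarrow> x < d \<Longrightarrow>
                    PX_ABL d p l x a b = PX_ABL d p l x a (2 * n - 1)"
    and nosig_Y: "\<And>a b y. a \<in> A_set n \<Longrightarrow> b \<in> B_set n \<Longrightarrow> y < d \<Longrightarrow>
                    PY_ABL d p l y a b = PY_ABL d p l y 0 b"
  shows "(\<Sum>x<d. \<bar>PX_ABL d p l x 0 (2 * n - 1) - 1 / real d\<bar>) \<le> real d / 2 * I_nd n d (p l)"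
proof -
  define N where "N = 2 * n - 1"
  have N: "0 < N" "odd N"
    using n by (auto simp: N_def)
  text \<open>The partner input is fixed to N at Alice's nodes and to 0 at Bob's; by no-signalling
    the choice does not matter.\<close>
  define V where "V k = (if even k then (\<lambda>x. PX_ABL d p l x k N) else (\<lambda>y. PY_ABL d p l y 0 k))"
    for k
  define u where "u k = 1 - (\<Sum>x<d. p l x x (chain_a k) (chain_b k))" for k
  define u' where "u' = 1 - (\<Sum>x<d. p l x ((x + 1) mod d) 0 N)"
  have "(\<Sum>x<d. \<bar>V 0 x - 1 / real d\<bar>) \<le> real d / 2 * (u' + (\<Sum>k<N. u k))"
  proof (rule chain_dist_uniform_le[OF N(1) _ _ _ d])
    show "0 \<le> mass_defect d (V k)" for k
      using mass_defect_PX_ABL_nonneg[where p = p and l = l, OF nonneg normalized]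
        mass_defect_PY_ABL_nonneg[where p = p and l = l, OF nonneg normalized]
      by (simp add: V_def)
  next
    fix k assume k: "k < N"
    have ends: "p l x x (chain_a k) (chain_b k) \<le> V j x" if "j = k \<or> j = Suc k" "x < d" for j x
    proof (cases "even j")
      case True
      then have "j = chain_a k" using that(1) by (auto simp: chain_a_def)
      then have "V j x = PX_ABL d p l x (chain_a k) (chain_b k)"
        using True nosig_X chain_links_in_inputs[OF k[unfolded N_def]] that(2) by (simp add: V_def N_def)
      then show ?thesis using p_le_PX_ABL[where p = p and l = l, OF nonneg] that(2) by simp
    next
      case False
      then have "j = chain_b k" using that(1) by (auto simp: chain_b_def)
      then have "V j x = PY_ABL d p l x (chain_a k) (chain_b k)"
        using False nosig_Y chain_links_in_inputs[OF k[unfolded N_def]] that(2) by (simp add: V_def)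
      then show ?thesis using p_le_PY_ABL[where p = p and l = l, OF nonneg] that(2) by simp
    qed
    show "mass_defect d (V k) + mass_defect d (V (Suc k)) + (\<Sum>x<d. \<bar>V (Suc k) x - V k x\<bar>) \<le> 2 * u k"
      unfolding u_def by (rule mass_defects_variation_le_disagreement) (use ends in auto)
  next
    have "(x + 1) mod d \<le> d" for x using d by (simp add: less_imp_le)
    then have "mass_defect d (V 0) + mass_defect d (\<lambda>x. V N ((x + 1) mod d))
        + (\<Sum>x<d. \<bar>V N ((x + 1) mod d) - V 0 x\<bar>) \<le> 2 * u'"
      unfolding u'_def using N(2)
      by (intro mass_defects_variation_le_disagreement) (auto simp: V_def intro: p_le_PX_ABL p_le_PY_ABL nonneg)
    then show "mass_defect d (V 0) + mass_defect d (V N)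
        + (\<Sum>x<d. \<bar>V N ((x + 1) mod d) - V 0 x\<bar>) \<le> 2 * u'"
      by (simp add: mass_defect_def sum_lessThan_rotate)
  qed
  moreover have "I_nd n d (p l) = u' + (\<Sum>k<N. u k)"
    unfolding I_nd_chain_form[OF n] u'_def u_def N_def ..
  ultimately show ?thesis by (simp add: V_def N_def)
qed

lemma (in prob_space) integral_one_minus_sum:
  fixes f :: "'i \<Rightarrow> 'a \<Rightarrow> real"
  assumes "\<And>i. i \<in> I \<Longrightarrow> integrable M (f i)"
  shows "integrable M (\<lambda>l. 1 - (\<Sum>i\<in>I. f i l))"
    and "(\<integral>l. 1 - (\<Sum>i\<in>I. f i l) \<partial>M) = 1 - (\<Sum>i\<in>I. \<integral>l. f i l \<partial>M)"
  using assms by (auto simp: Bochner_Integration.integral_diff Bochner_Integration.integral_sum prob_space)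

lemma integral_I_nd:
  fixes M :: "'l measure"
  assumes "prob_space M" "1 \<le> n"
    and integrable: "\<And>x y a b. x < d \<Longrightarrow> y < d \<Longrightarrow> integrable M (\<lambda>l. p l x y a b)"
  shows "integrable M (\<lambda>l. I_nd n d (p l))" "(\<integral>l. I_nd n d (p l) \<partial>M) = I_nd n d (PXY_AB M p)"
proof -
  interpret prob_space M by fact
  have "integrable M (\<lambda>l. p l x ((x + 1) mod d) 0 (2 * n - 1))"
    and "integrable M (\<lambda>l. p l x x (chain_a k) (chain_b k))" if "x \<in> {..<d}" for x k
    using that by (auto intro: integrable)
  note closing = integral_one_minus_sum[where f = "\<lambda>x l. p l x ((x + 1) mod d) 0 (2 * n - 1)", OF this(1)]
    and links = integral_one_minus_sum[where f = "\<lambda>x l. p l x x (chain_a k) (chain_b k)" for k, OF this(2)]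
  show "integrable M (\<lambda>l. I_nd n d (p l))"
    unfolding I_nd_chain_form[OF assms(2)]
    by (intro Bochner_Integration.integrable_add Bochner_Integration.integrable_sum closing links)
  then show "(\<integral>l. I_nd n d (p l) \<partial>M) = I_nd n d (PXY_AB M p)"
    unfolding I_nd_chain_form[OF assms(2)] PXY_AB_def
    by (simp only: Bochner_Integration.integral_add[OF closing(1) Bochner_Integration.integrable_sum[OF links(1)]]
        Bochner_Integration.integral_sum[OF links(1)] closing(2) links(2))
qed

theorem lemma2:
  fixes n d :: nat
    and M :: "'l measure"
    and pA pB :: "nat pmf"
    and p :: "'l \<Rightarrow> nat \<Rightarrow> nat \<Rightarrow> nat \<Rightarrow> nat \<Rightarrow> real"
  assumes n_pos: "n \<ge> 1"
    and prob: "prob_space M"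
    and meas: "\<And>x y a b. (\<lambda>l. p l x y a b) \<in> borel_measurable M"
    and nonneg: "\<And>l x y a b. p l x y a b \<ge> 0"
    and normalized: "\<And>l a b. (\<Sum>x\<in>{0..d}. \<Sum>y\<in>{0..d}. p l x y a b) = 1"
    and nosig_X: "\<And>a b b' x. a \<in> set_pmf pA \<Longrightarrow> b \<in> set_pmf pB \<Longrightarrow> b' \<in> set_pmf pB \<Longrightarrow>
                    AE l in M. PX_ABL d p l x a b = PX_ABL d p l x a b'"
    and nosig_Y: "\<And>a a' b y. a \<in> set_pmf pA \<Longrightarrow> a' \<in> set_pmf pA \<Longrightarrow> b \<in> set_pmf pB \<Longrightarrow>
                    AE l in M. PY_ABL d p l y a b = PY_ABL d p l y a' b"
    and suppA: "A_set n \<subseteq> set_pmf pA"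
    and suppB: "B_set n \<subseteq> set_pmf pB"
  shows "(\<integral>l. (\<Sum>x<d. \<bar>PX_ABL d p l x 0 (2*n - 1) - 1 / real d\<bar>) \<partial>M)
           \<le> real d / 2 * I_nd n d (PXY_AB M p)"
proof (cases "d = 0")
  case False
  interpret prob_space M by (rule prob)
  have integrable_p: "integrable M (\<lambda>l. p l x y a b)" if "x \<le> d" "y \<le> d" for x y a b
    by (rule integrable_const_bound[where B = 1])
      (use p_le_one[where p = p, OF nonneg normalized] that meas nonneg in auto)
  have inputs: "0 \<in> A_set n" "2 * n - 1 \<in> B_set n"
    using n_pos by (auto simp: A_set_def B_set_def)
  have "AE l in M. \<forall>a\<in>A_set n. \<forall>b\<in>B_set n. \<forall>x\<in>{..<d}. PX_ABL d p l x a b = PX_ABL d p l x a (2 * n - 1)"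
    and "AE l in M. \<forall>a\<in>A_set n. \<forall>b\<in>B_set n. \<forall>y\<in>{..<d}. PY_ABL d p l y a b = PY_ABL d p l y 0 b"
    using suppA suppB inputs
    by (intro AE_finite_allI finite_A_set finite_B_set finite_lessThan nosig_X nosig_Y; force)+
  then have "AE l in M. (\<Sum>x<d. \<bar>PX_ABL d p l x 0 (2 * n - 1) - 1 / real d\<bar>) \<le> real d / 2 * I_nd n d (p l)"
    by eventually_elim (rule PX_ABL_dist_uniform_le_I_nd[OF n_pos]; use False nonneg normalized in auto)
  then have "(\<integral>l. (\<Sum>x<d. \<bar>PX_ABL d p l x 0 (2 * n - 1) - 1 / real d\<bar>) \<partial>M)
      \<le> (\<integral>l. real d / 2 * I_nd n d (p l) \<partial>M)"
    by (intro integral_mono_AE integrable_mult_right integral_I_nd(1)[OF prob n_pos] integrable_p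
        Bochner_Integration.integrable_sum integrable_abs Bochner_Integration.integrable_diff integrable_const)
      (auto simp: PX_ABL_def intro!: Bochner_Integration.integrable_sum integrable_p)
  also have "\<dots> = real d / 2 * I_nd n d (PXY_AB M p)"
    using integral_I_nd(2)[OF prob n_pos] integrable_p by simp
  finally show ?thesis .
qed simp

end
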